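(* Let $m,k,n\ge 1$, let $A$ be a real $m\times m$ matrix and $B$ a real $m\times k$ matrix with $\operatorname{rank}[B, AB, \dots, A^{m-1}B]=m$. Let $g:\mathbb{R}^k\times\mathbb{R}^m\times\mathbb{R}^n\to\mathbb{R}^n$ be Borel measurable and bounded, $\sup_{(u,y,z)}\|g(u,y,z)\|=M_g<\infty$, and Lipschitz continuous in $(y,z)$ uniformly with respect to $u\in\mathbb{R}^k$. For a control $u(\cdot)$ (a measurable function $[0,\infty)\to\mathbb{R}^k$ for which the equation below has a solution) and $y\in\mathbb{R}^m$, let $y(\tau,u(\cdot),y)$ denote the solution of $\frac{dy(\tau)}{d\tau}=Ay(\tau)+Bu(\tau)$ with $y(0)=y$. For $S>0$, $y\in\mathbb{R}^m$, $z\in\mathbb{R}^n$ define $$V(S,y,z):=\bigcup_{u(\cdot)}\left\{\frac{1}{S}\int_0^S g\big(u(\tau),y(\tau,u(\cdot),y),z\big)\,d\tau\right\},$$ the union being over all controls $u(\cdot)$. Then for every $z\in\mathbb{R}^n$, every $y\in\mathbb{R}^m$ and every $S>0$, $$\mathrm{cl}\,(V(S,y,z))=\overline{\mathrm{co}}\,\{g(u,y',z):\ u\in\mathbb{R}^k,\ y'\in\mathbb{R}^m\}.$$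
   Context: $\mathrm{cl}$ denotes closure in $\mathbb{R}^n$ and $\overline{\mathrm{co}}$ the closure of the convex hull. Solutions of the linear equation are understood in the Carathéodory sense. *)

theory Defs
  imports "HOL-Analysis.Analysis"
begin

definition mat_pow :: "real^'m^'m \<Rightarrow> nat \<Rightarrow> real^'m^'m" where
  "mat_pow A i = (((**) A) ^^ i) (mat 1)"

(* rank of the controllability matrix [B, AB, ..., A^(m-1) B], m = CARD('m),
   i.e. the dimension of the space spanned by its columns (column rank) *)
definition ctrb_rank :: "real^'m^'m \<Rightarrow> real^'k^'m \<Rightarrow> nat" where
  "ctrb_rank A B = dim (\<Union>i<CARD('m). columns (mat_pow A i ** B))"

(* yt is a Caratheodory solution on [0,\<infinity>) of y' = A y + B u(t), y(0) = y0 *)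
definition lin_traj :: "real^'m^'m \<Rightarrow> real^'k^'m \<Rightarrow> (real \<Rightarrow> real^'k) \<Rightarrow> real^'m
    \<Rightarrow> (real \<Rightarrow> real^'m) \<Rightarrow> bool" where
  "lin_traj A B u y0 yt \<longleftrightarrow>
     (\<forall>t\<ge>0. (\<lambda>s. A *v yt s + B *v u s) absolutely_integrable_on {0..t} \<and>
             yt t = y0 + integral {0..t} (\<lambda>s. A *v yt s + B *v u s))"

definition adm_control :: "real^'m^'m \<Rightarrow> real^'k^'m \<Rightarrow> real^'m \<Rightarrow> (real \<Rightarrow> real^'k) \<Rightarrow> bool" where
  "adm_control A B y0 u \<longleftrightarrow>
     u \<in> borel_measurable (lebesgue_on {0..}) \<and> (\<exists>yt. lin_traj A B u y0 yt)"

(* V(S,y,z); the trajectory is unique for an admissible control *)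
definition Vset :: "real^'m^'m \<Rightarrow> real^'k^'m \<Rightarrow> (real^'k \<Rightarrow> real^'m \<Rightarrow> real^'n \<Rightarrow> real^'n)
    \<Rightarrow> real \<Rightarrow> real^'m \<Rightarrow> real^'n \<Rightarrow> (real^'n) set" where
  "Vset A B g S y z =
     {(1 / S) *\<^sub>R integral {0..S} (\<lambda>\<tau>. g (u \<tau>) (yt \<tau>) z) | u yt.
        adm_control A B y u \<and> lin_traj A B u y yt}"

end

theory Submission
  imports Defs
begin

(*
  Every element of V(S,y,z) is the mean over [0,S] of a function with values in the closed
  convex hull C of the values g(u,y',z), so it lies in C: a point outside C would be separated
  from C by a hyperplane.

  Conversely, let q = w_1 g(u_1,y_1,z) + ... + w_k g(u_k,y_k,z). The rank condition makes the
  system controllable in every time tau > 0: otherwise some eta <> 0 is orthogonal to every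
  state reachable from 0, and differentiating h |-> eta . int_0^h e^(sA) B c ds repeatedly at
  h = 0 yields eta . A^j B c = 0 for all j. Divide [0,S] into N cycles of k blocks. In block i
  the control first steers the state to y_i within the short time tau and then holds the
  constant value u_i for a time proportional to w_i. The steering phases fill a fraction theta
  of [0,S], and for large N every holding phase is so short that g(u_i, y(t), z) stays within
  d of g(u_i, y_i, z). Hence the mean of g along the trajectory is within 2 M theta + d of q.
*)

section \<open>Matrix exponential\<close>

text \<open>Bounded endomorphisms form a Banach algebra, so the library's \<open>exp\<close> provides
  \<open>e\<^sup>t\<^sup>A\<close>.\<close>

typedef (overloaded) 'a endo = "UNIV :: ('a::euclidean_space \<Rightarrow>\<^sub>L 'a) set"
  morphisms endo_blinfun Endo by auto

lemmas Endo_inverse_UNIV[simp] = Endo_inverse[OF UNIV_I]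
declare endo_blinfun_inverse[simp]

lemma endo_eq_iff: "x = y \<longleftrightarrow> endo_blinfun x = endo_blinfun y"
  by (simp add: endo_blinfun_inject)

instantiation endo :: (euclidean_space) real_normed_algebra_1
begin
definition "zero_endo = Endo 0"
definition "one_endo = Endo id_blinfun"
definition "plus_endo x y = Endo (endo_blinfun x + endo_blinfun y)"
definition "minus_endo x y = Endo (endo_blinfun x - endo_blinfun y)"
definition "uminus_endo x = Endo (- endo_blinfun x)"
definition "times_endo x y = Endo (endo_blinfun x o\<^sub>L endo_blinfun y)"
definition "scaleR_endo r x = Endo (r *\<^sub>R endo_blinfun x)"
definition "norm_endo x = norm (endo_blinfun x)"
definition "sgn_endo (x::'a endo) = scaleR (inverse (norm x)) x"
definition "dist_endo (x::'a endo) y = norm (x - y)"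
definition "uniformity_endo = (INF e\<in>{0 <..}. principal {(x::'a endo, y). dist x y < e})"
definition "open_endo (S::'a endo set) = (\<forall>x\<in>S. \<forall>\<^sub>F (x', y) in uniformity. x' = x \<longrightarrow> y \<in> S)"
instance
proof
  fix a b c :: "'a endo" and r s :: real
  show "a + b + c = a + (b + c)" "a + b = b + a" "0 + a = a"
    by (simp_all add: plus_endo_def zero_endo_def algebra_simps)
  show "- a + a = 0" "a - b = a + - b"
    by (simp_all add: plus_endo_def zero_endo_def uminus_endo_def minus_endo_def)
  show "r *\<^sub>R (a + b) = r *\<^sub>R a + r *\<^sub>R b" "(r + s) *\<^sub>R a = r *\<^sub>R a + s *\<^sub>R a"
    "r *\<^sub>R s *\<^sub>R a = (r * s) *\<^sub>R a" "1 *\<^sub>R a = a"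
    by (simp_all add: plus_endo_def scaleR_endo_def algebra_simps)
  show "a * b * c = a * (b * c)" "(a + b) * c = a * c + b * c" "a * (b + c) = a * b + a * c"
    "r *\<^sub>R a * b = r *\<^sub>R (a * b)" "a * r *\<^sub>R b = r *\<^sub>R (a * b)" "1 * a = a" "a * 1 = a"
    by (simp_all add: times_endo_def plus_endo_def scaleR_endo_def one_endo_def endo_eq_iff)
      (auto intro!: blinfun_eqI simp: blinfun.bilinear_simps)
  have "(id_blinfun::'a \<Rightarrow>\<^sub>L 'a) \<noteq> 0"
    by (metis norm_blinfun_id norm_zero zero_neq_one)
  then show "(0::'a endo) \<noteq> 1"
    by (auto simp: zero_endo_def one_endo_def endo_eq_iff)
  show "norm (1::'a endo) = 1" "norm (a * b) \<le> norm a * norm b"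
    by (simp_all add: norm_endo_def one_endo_def times_endo_def norm_blinfun_compose)
  show "dist a b = norm (a - b)" "sgn a = inverse (norm a) *\<^sub>R a"
    "(uniformity :: ('a endo \<times> 'a endo) filter) = (INF e\<in>{0 <..}. principal {(x, y). dist x y < e})"
    by (simp_all add: dist_endo_def sgn_endo_def uniformity_endo_def)
  show "open U = (\<forall>x\<in>U. \<forall>\<^sub>F (x', y) in uniformity. x' = x \<longrightarrow> y \<in> U)" for U :: "'a endo set"
    by (simp add: open_endo_def)
  show "(norm a = 0) = (a = 0)" "norm (a + b) \<le> norm a + norm b" "norm (r *\<^sub>R a) = \<bar>r\<bar> * norm a"
    by (simp_all add: norm_endo_def zero_endo_def plus_endo_def scaleR_endo_def endo_eq_iff
        norm_triangle_ineq)
qed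
end

lemma norm_endo_blinfun_diff: "norm (endo_blinfun a - endo_blinfun b) = norm (a - b)"
  by (simp add: norm_endo_def minus_endo_def)

instance endo :: (euclidean_space) banach
proof
  fix X :: "nat \<Rightarrow> 'a endo"
  assume "Cauchy X"
  then have "Cauchy (\<lambda>n. endo_blinfun (X n))"
    by (simp add: Cauchy_def dist_norm norm_endo_blinfun_diff)
  then obtain l where "(\<lambda>n. endo_blinfun (X n)) \<longlonglongrightarrow> l"
    by (auto simp: convergent_eq_Cauchy[symmetric] convergent_def)
  then have "X \<longlonglongrightarrow> Endo l"
    by (simp add: LIMSEQ_iff dist_norm flip: norm_endo_blinfun_diff)
  then show "convergent X" by (auto simp: convergent_def)
qed

lemma bounded_linear_endo_blinfun: "bounded_linear endo_blinfun"
  by (rule bounded_linear_intro[where K=1])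
    (auto simp: plus_endo_def scaleR_endo_def norm_endo_def)

definition mat_exp :: "real^'m^'m \<Rightarrow> real \<Rightarrow> real^'m \<Rightarrow> real^'m" where
  "mat_exp A t = blinfun_apply (endo_blinfun (exp (t *\<^sub>R Endo (Blinfun (\<lambda>x. A *v x)))))"

lemma mat_exp_at_0[simp]: "mat_exp A 0 w = w"
  by (simp add: mat_exp_def one_endo_def)

lemma mat_exp_zero_right[simp]: "mat_exp A t 0 = 0"
  by (simp add: mat_exp_def)

lemma
  shows has_vector_derivative_mat_exp_right:
    "((\<lambda>t. mat_exp A t w) has_vector_derivative mat_exp A t (A *v w)) (at t within X)"
    and has_vector_derivative_mat_exp_left:
    "((\<lambda>t. mat_exp A t w) has_vector_derivative A *v mat_exp A t w) (at t within X)"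
proof -
  define E where "E = Endo (Blinfun (\<lambda>x. A *v x))"
  have E: "blinfun_apply (endo_blinfun E) x = A *v x" for x
    by (simp add: E_def bounded_linear_Blinfun_apply)
  have apply_w: "bounded_linear (\<lambda>X. blinfun_apply (endo_blinfun X) w)"
    using bounded_linear_compose[OF blinfun.bounded_linear_left bounded_linear_endo_blinfun] .
  show "((\<lambda>t. mat_exp A t w) has_vector_derivative mat_exp A t (A *v w)) (at t within X)"
    using bounded_linear.has_vector_derivative[OF apply_w
        exp_scaleR_has_vector_derivative_right[of E t X]]
    unfolding mat_exp_def E_def[symmetric] by (simp add: times_endo_def E)
  show "((\<lambda>t. mat_exp A t w) has_vector_derivative A *v mat_exp A t w) (at t within X)"
    using bounded_linear.has_vector_derivative[OF apply_w
        exp_scaleR_has_vector_derivative_left[of E t]]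
    unfolding mat_exp_def E_def[symmetric]
    by (auto simp: times_endo_def E intro: has_vector_derivative_at_within)
qed

lemma mat_exp_commute: "A *v mat_exp A t w = mat_exp A t (A *v w)"
  using vector_derivative_unique_at[OF has_vector_derivative_mat_exp_left
      has_vector_derivative_mat_exp_right] .

lemma continuous_on_mat_exp: "continuous_on X (\<lambda>t. mat_exp A t w)"
  by (rule continuous_on_vector_derivative[OF has_vector_derivative_mat_exp_right])

definition mat_exp_integral :: "real^'m^'m \<Rightarrow> real \<Rightarrow> real^'m \<Rightarrow> real^'m" where
  "mat_exp_integral A t w = integral {0..t} (\<lambda>s. mat_exp A s w)"

lemma mat_exp_integral_eq:
  assumes "0 \<le> t"
  shows "A *v mat_exp_integral A t w + w = mat_exp A t w"
proof -
  have "A *v mat_exp_integral A t w = integral {0..t} (\<lambda>s. A *v mat_exp A s w)"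
    unfolding mat_exp_integral_def
    by (rule integral_linear[OF integrable_continuous_real[OF continuous_on_mat_exp], symmetric,
          unfolded o_def]) simp
  also have "\<dots> = mat_exp A t w - mat_exp A 0 w"
    by (intro integral_unique fundamental_theorem_of_calculus[OF assms]
        has_vector_derivative_mat_exp_left)
  finally show ?thesis by simp
qed

lemma has_vector_derivative_mat_exp_integral:
  assumes "0 < t"
  shows "((\<lambda>t. mat_exp_integral A t w) has_vector_derivative mat_exp A t w) (at t)"
proof -
  have "((\<lambda>u. integral {0..u} (\<lambda>s. mat_exp A s w)) has_vector_derivative mat_exp A t w)
      (at t within {0<..<t+1})"
    by (rule has_vector_derivative_within_subset[OF
          integral_has_vector_derivative[OF continuous_on_mat_exp, of t 0 "t+1"]])
      (use assms in auto)
  then show ?thesis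
    using at_within_open[of t "{0<..<t+1}"] assms by (simp add: mat_exp_integral_def)
qed

lemma continuous_on_mat_exp_integral: "continuous_on {0..b} (\<lambda>t. mat_exp_integral A t w)"
  unfolding mat_exp_integral_def
  by (rule indefinite_integral_continuous_1[OF
        integrable_continuous_real[OF continuous_on_mat_exp]])

section \<open>Piecewise differentiable solutions\<close>

text \<open>Differentiability is only required off a finite set, so that solutions on adjacent
  intervals can be concatenated.\<close>

definition lin_sol_on :: "real^'m^'m \<Rightarrow> real^'k^'m \<Rightarrow> real \<Rightarrow> real \<Rightarrow> (real \<Rightarrow> real^'k)
    \<Rightarrow> (real \<Rightarrow> real^'m) \<Rightarrow> bool" where
  "lin_sol_on A B a b u y \<longleftrightarrow> a \<le> b \<and> continuous_on {a..b} y \<and>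
     (\<exists>K. finite K \<and> (\<forall>x\<in>{a<..<b} - K. (y has_vector_derivative (A *v y x + B *v u x)) (at x)))"

definition const_control_sol :: "real^'m^'m \<Rightarrow> real^'k^'m \<Rightarrow> real \<Rightarrow> real^'m \<Rightarrow> real^'k
    \<Rightarrow> real \<Rightarrow> real^'m" where
  "const_control_sol A B a p c t = mat_exp A (t - a) p + mat_exp_integral A (t - a) (B *v c)"

lemma const_control_sol_start[simp]: "const_control_sol A B a p c a = p"
  by (simp add: const_control_sol_def mat_exp_integral_def)

lemma const_control_sol_shift: "const_control_sol A B a p c t = const_control_sol A B 0 p c (t - a)"
  by (simp add: const_control_sol_def)

lemma lin_sol_on_const_control:
  assumes "a \<le> b"
  shows "lin_sol_on A B a b (\<lambda>_. c) (const_control_sol A B a p c)"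
  unfolding lin_sol_on_def
proof (intro conjI exI[of _ "{}"] ballI)
  show "continuous_on {a..b} (const_control_sol A B a p c)"
    unfolding const_control_sol_def
    by (intro continuous_on_add continuous_on_compose2[OF continuous_on_mat_exp[of UNIV]]
        continuous_on_compose2[OF continuous_on_mat_exp_integral[of "b - a"]])
      (auto intro!: continuous_intros)
  fix x assume x: "x \<in> {a<..<b} - {}"
  have shift: "((\<lambda>t. t - a) has_vector_derivative 1) (at x)"
    by (auto intro!: derivative_eq_intros)
  have "((\<lambda>t. mat_exp A (t - a) p) has_vector_derivative mat_exp A (x - a) (A *v p)) (at x)"
    using vector_diff_chain_at[OF shift has_vector_derivative_mat_exp_right] by (simp add: o_def)
  moreover have "((\<lambda>t. mat_exp_integral A (t - a) (B *v c)) has_vector_derivative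
      mat_exp A (x - a) (B *v c)) (at x)"
    using vector_diff_chain_at[OF shift has_vector_derivative_mat_exp_integral] x
    by (simp add: o_def)
  ultimately have "(const_control_sol A B a p c has_vector_derivative
      mat_exp A (x - a) (A *v p) + mat_exp A (x - a) (B *v c)) (at x)"
    unfolding const_control_sol_def[abs_def] by (rule has_vector_derivative_add)
  moreover have "A *v const_control_sol A B a p c x + B *v c
      = mat_exp A (x - a) (A *v p) + mat_exp A (x - a) (B *v c)"
    using mat_exp_integral_eq[of "x - a" A "B *v c"] x
    by (simp add: const_control_sol_def matrix_vector_right_distrib mat_exp_commute)
  ultimately show "(const_control_sol A B a p c has_vector_derivative
      A *v const_control_sol A B a p c x + B *v c) (at x)"
    by simp
qed (use assms in simp_all)

lemma lin_sol_on_zero: "a \<le> b \<Longrightarrow> lin_sol_on A B a b (\<lambda>_. 0) (\<lambda>_. 0)"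
  by (auto simp: lin_sol_on_def intro!: exI[of _ "{}"])

lemma lin_sol_on_point: "lin_sol_on A B a a u (\<lambda>_. p)"
  by (auto simp: lin_sol_on_def intro!: exI[of _ "{}"])

lemma lin_sol_on_add:
  assumes "lin_sol_on A B a b u1 y1" "lin_sol_on A B a b u2 y2"
  shows "lin_sol_on A B a b (\<lambda>t. u1 t + u2 t) (\<lambda>t. y1 t + y2 t)"
proof -
  obtain K1 K2 where K: "finite K1" "finite K2"
    "\<And>x. x \<in> {a<..<b} - K1 \<Longrightarrow> (y1 has_vector_derivative (A *v y1 x + B *v u1 x)) (at x)"
    "\<And>x. x \<in> {a<..<b} - K2 \<Longrightarrow> (y2 has_vector_derivative (A *v y2 x + B *v u2 x)) (at x)"
    using assms by (auto simp: lin_sol_on_def)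
  have "((\<lambda>t. y1 t + y2 t) has_vector_derivative A *v (y1 x + y2 x) + B *v (u1 x + u2 x)) (at x)"
    if "x \<in> {a<..<b} - (K1 \<union> K2)" for x
    using has_vector_derivative_add[OF K(3,4)] that by (simp add: algebra_simps)
  with assms K(1,2) show ?thesis
    unfolding lin_sol_on_def by (blast intro: continuous_on_add)
qed

lemma lin_sol_on_scaleR:
  assumes "lin_sol_on A B a b u y"
  shows "lin_sol_on A B a b (\<lambda>t. r *\<^sub>R u t) (\<lambda>t. r *\<^sub>R y t)"
proof -
  obtain K where K: "finite K"
    "\<And>x. x \<in> {a<..<b} - K \<Longrightarrow> (y has_vector_derivative (A *v y x + B *v u x)) (at x)"
    using assms by (auto simp: lin_sol_on_def)
  have "((\<lambda>t. r *\<^sub>R y t) has_vector_derivative A *v (r *\<^sub>R y x) + B *v (r *\<^sub>R u x)) (at x)"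
    if "x \<in> {a<..<b} - K" for x
    using bounded_linear.has_vector_derivative[OF bounded_linear_scaleR_right K(2)[OF that], of r]
    by (simp add: matrix_vector_mult_scaleR scaleR_add_right)
  with assms K(1) show ?thesis
    unfolding lin_sol_on_def by (intro conjI exI[of _ K]) (auto intro!: continuous_intros)
qed

lemma lin_sol_on_subinterval:
  "lin_sol_on A B a b u y \<Longrightarrow> a \<le> c \<Longrightarrow> c \<le> d \<Longrightarrow> d \<le> b \<Longrightarrow> lin_sol_on A B c d u y"
  unfolding lin_sol_on_def by (auto intro: continuous_on_subset)

lemma lin_sol_on_append:
  assumes sol1: "lin_sol_on A B a b u1 y1" and sol2: "lin_sol_on A B b c u2 y2"
    and match: "y1 b = y2 b"
  shows "lin_sol_on A B a c (\<lambda>t. if t \<le> b then u1 t else u2 t) (\<lambda>t. if t \<le> b then y1 t else y2 t)"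
proof -
  obtain K1 K2 where K: "finite K1" "finite K2"
    "\<And>x. x \<in> {a<..<b} - K1 \<Longrightarrow> (y1 has_vector_derivative (A *v y1 x + B *v u1 x)) (at x)"
    "\<And>x. x \<in> {b<..<c} - K2 \<Longrightarrow> (y2 has_vector_derivative (A *v y2 x + B *v u2 x)) (at x)"
    using sol1 sol2 by (auto simp: lin_sol_on_def)
  have ab: "a \<le> b" and bc: "b \<le> c" using sol1 sol2 by (auto simp: lin_sol_on_def)
  have "continuous_on ({a..b} \<union> {b..c}) (\<lambda>t. if t \<le> b then y1 t else y2 t)"
    using sol1 sol2 match by (intro continuous_on_cases) (auto simp: lin_sol_on_def)
  moreover have "{a..b} \<union> {b..c} = {a..c}" using ab bc by auto
  moreover have "((\<lambda>t. if t \<le> b then y1 t else y2 t) has_vector_derivative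
      A *v (if x \<le> b then y1 x else y2 x) + B *v (if x \<le> b then u1 x else u2 x)) (at x)"
    if x: "x \<in> {a<..<c} - (K1 \<union> K2 \<union> {b})" for x
  proof (cases "x < b")
    case True
    with x have d: "(y1 has_vector_derivative (A *v y1 x + B *v u1 x)) (at x)" by (intro K(3)) auto
    show ?thesis
      using True by (auto intro!: has_vector_derivative_transform_within_open[OF d, of "{a<..<b}"])
        (use x in auto)
  next
    case False
    with x have d: "(y2 has_vector_derivative (A *v y2 x + B *v u2 x)) (at x)" by (intro K(4)) auto
    show ?thesis
      using False x
      by (auto intro!: has_vector_derivative_transform_within_open[OF d, of "{b<..<c}"])
  qed
  ultimately show ?thesis
    using ab bc K(1,2) unfolding lin_sol_on_def
    by (intro conjI exI[of _ "K1 \<union> K2 \<union> {b}"]) auto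
qed

lemma lin_sol_on_shift:
  assumes "lin_sol_on A B a b u y"
  shows "lin_sol_on A B (a + s) (b + s) (\<lambda>t. u (t - s)) (\<lambda>t. y (t - s))"
proof -
  obtain K where K: "finite K"
    "\<And>x. x \<in> {a<..<b} - K \<Longrightarrow> (y has_vector_derivative (A *v y x + B *v u x)) (at x)"
    using assms by (auto simp: lin_sol_on_def)
  have "continuous_on {a + s..b + s} (\<lambda>t. y (t - s))"
    using assms unfolding lin_sol_on_def
    by (auto intro!: continuous_intros elim!: continuous_on_compose2)
  moreover have "\<forall>x\<in>{a + s<..<b + s} - (\<lambda>t. t + s) ` K.
      ((\<lambda>t. y (t - s)) has_vector_derivative A *v y (x - s) + B *v u (x - s)) (at x)"
  proof
    fix x assume x: "x \<in> {a + s<..<b + s} - (\<lambda>t. t + s) ` K"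
    have shift: "((\<lambda>t. t - s) has_vector_derivative 1) (at x)"
      by (auto intro!: derivative_eq_intros)
    have "(y has_vector_derivative (A *v y (x - s) + B *v u (x - s))) (at (x - s))"
      using x by (intro K(2)) force
    then show "((\<lambda>t. y (t - s)) has_vector_derivative A *v y (x - s) + B *v u (x - s)) (at x)"
      using vector_diff_chain_at[OF shift] by (simp add: o_def)
  qed
  moreover have "finite ((\<lambda>t. t + s) ` K)" and "a + s \<le> b + s"
    using assms K(1) by (simp_all add: lin_sol_on_def)
  ultimately show ?thesis
    unfolding lin_sol_on_def by blast
qed

definition bounded_borel :: "(real \<Rightarrow> 'a::euclidean_space) \<Rightarrow> bool" where
  "bounded_borel u \<longleftrightarrow> u \<in> borel_measurable borel \<and> bounded (range u)"

lemma bounded_borel_const: "bounded_borel (\<lambda>_. c)"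
  by (simp add: bounded_borel_def)

lemma bounded_borel_add: "bounded_borel u \<Longrightarrow> bounded_borel v \<Longrightarrow> bounded_borel (\<lambda>t. u t + v t)"
  by (simp add: bounded_borel_def bounded_plus_comp borel_measurable_add)

lemma bounded_borel_scaleR: "bounded_borel u \<Longrightarrow> bounded_borel (\<lambda>t. r *\<^sub>R u t)"
  by (simp add: bounded_borel_def bounded_scaleR_comp borel_measurable_scaleR)

lemma bounded_borel_if:
  assumes "bounded_borel u" "bounded_borel v"
  shows "bounded_borel (\<lambda>t. if t \<le> b then u t else v t)"
proof -
  have "range (\<lambda>t. if t \<le> b then u t else v t) \<subseteq> range u \<union> range v" by auto
  with assms show ?thesis
    unfolding bounded_borel_def by (auto intro!: measurable_If elim: bounded_subset)
qed

lemma bounded_borel_shift: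
  assumes "bounded_borel u"
  shows "bounded_borel (\<lambda>t. u (t - s))"
proof -
  have "range (\<lambda>t. u (t - s)) \<subseteq> range u" by auto
  with assms show ?thesis
    unfolding bounded_borel_def
    by (auto intro: measurable_compose[of "\<lambda>t. t - s"] elim: bounded_subset)
qed

section \<open>Controllability\<close>

lemma mat_pow_mult_vec: "mat_pow A j *v x = ((\<lambda>x. A *v x) ^^ j) x"
  by (induction j arbitrary: x) (simp_all add: mat_pow_def flip: matrix_vector_mul_assoc)

lemma ctrb_rank_orthogonal_eq_0:
  fixes A :: "real^'m^'m" and B :: "real^'k^'m"
  assumes ctrb: "ctrb_rank A B = CARD('m)"
    and orth: "\<And>j c. j < CARD('m) \<Longrightarrow> \<eta> \<bullet> ((\<lambda>x. A *v x) ^^ j) (B *v c) = 0"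
  shows "\<eta> = 0"
proof -
  define U where "U = (\<Union>i<CARD('m). columns (mat_pow A i ** B))"
  have "span U = UNIV"
    using ctrb dim_eq_full[of U] by (simp add: ctrb_rank_def U_def)
  moreover have "orthogonal \<eta> v" if "v \<in> U" for v
  proof -
    from that obtain i k where "i < CARD('m)" "v = (mat_pow A i ** B) *v axis k 1"
      by (auto simp: U_def columns_image_basis)
    then show ?thesis
      using orth by (simp add: orthogonal_def mat_pow_mult_vec flip: matrix_vector_mul_assoc)
  qed
  ultimately have "orthogonal \<eta> \<eta>"
    using orthogonal_to_span[of \<eta> U \<eta>] by auto
  then show ?thesis by (simp add: orthogonal_def)
qed

lemma has_vector_derivative_zero_on_open:
  fixes f :: "real \<Rightarrow> 'a::real_normed_vector"
  assumes "(f has_vector_derivative D) (at x)" "open S" "x \<in> S" "\<And>y. y \<in> S \<Longrightarrow> f y = 0"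
  shows "D = 0"
proof -
  have "((\<lambda>_. 0) has_vector_derivative 0) (at x)"
    by simp
  then have "(f has_vector_derivative 0) (at x)"
    by (rule has_vector_derivative_transform_within_open[OF _ assms(2,3)]) (use assms(4) in auto)
  then show ?thesis using vector_derivative_unique_at[OF assms(1)] by simp
qed

lemma inner_mat_exp_vanishing_mult:
  assumes "\<forall>h\<in>{0<..<T}. \<eta> \<bullet> mat_exp A h w = 0"
  shows "\<forall>h\<in>{0<..<T}. \<eta> \<bullet> mat_exp A h (A *v w) = 0"
proof
  fix h assume h: "h \<in> {0<..<T}"
  have "((\<lambda>h. \<eta> \<bullet> mat_exp A h w) has_vector_derivative \<eta> \<bullet> mat_exp A h (A *v w)) (at h)"
    by (rule bounded_linear.has_vector_derivative[OF bounded_linear_inner_right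
          has_vector_derivative_mat_exp_right])
  then show "\<eta> \<bullet> mat_exp A h (A *v w) = 0"
    by (rule has_vector_derivative_zero_on_open[of _ _ _ "{0<..<T}"]) (use h assms in auto)
qed

lemma inner_mat_exp_vanishing_at_0:
  assumes "0 < T" "\<forall>h\<in>{0<..<T}. \<eta> \<bullet> mat_exp A h w = 0"
  shows "\<eta> \<bullet> w = 0"
proof -
  have "isCont (\<lambda>h. \<eta> \<bullet> mat_exp A h w) 0"
    using continuous_on_mat_exp[of UNIV A w]
    by (auto intro!: continuous_intros simp: continuous_on_eq_continuous_at)
  then have "((\<lambda>h. \<eta> \<bullet> mat_exp A h w) \<longlongrightarrow> \<eta> \<bullet> w) (at_right 0)"
    by (simp add: isCont_def filterlim_at_split)
  moreover have "((\<lambda>h. \<eta> \<bullet> mat_exp A h w) \<longlongrightarrow> 0) (at_right 0)"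
    using assms by (intro tendsto_eventually) (auto simp: eventually_at_right_field)
  ultimately show ?thesis
    using tendsto_unique[OF trivial_limit_at_right_real] by blast
qed

lemma inner_mat_exp_integral_vanishing:
  assumes "0 < T" and vanish: "\<And>h. 0 \<le> h \<Longrightarrow> h \<le> T \<Longrightarrow> \<eta> \<bullet> mat_exp_integral A h w = 0"
  shows "\<eta> \<bullet> ((\<lambda>x. A *v x) ^^ j) w = 0"
proof -
  have "\<forall>h\<in>{0<..<T}. \<eta> \<bullet> mat_exp A h w = 0"
  proof
    fix h assume h: "h \<in> {0<..<T}"
    have "((\<lambda>h. \<eta> \<bullet> mat_exp_integral A h w) has_vector_derivative \<eta> \<bullet> mat_exp A h w) (at h)"
      using h by (intro bounded_linear.has_vector_derivative[OF bounded_linear_inner_right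
            has_vector_derivative_mat_exp_integral]) simp
    then show "\<eta> \<bullet> mat_exp A h w = 0"
      by (rule has_vector_derivative_zero_on_open[of _ _ _ "{0<..<T}"]) (use h vanish in auto)
  qed
  then have "\<forall>h\<in>{0<..<T}. \<eta> \<bullet> mat_exp A h (((\<lambda>x. A *v x) ^^ j) w) = 0"
    by (induction j) (simp_all add: inner_mat_exp_vanishing_mult)
  then show ?thesis
    using inner_mat_exp_vanishing_at_0[OF \<open>0 < T\<close>] by blast
qed

definition reachable_set :: "real^'m^'m \<Rightarrow> real^'k^'m \<Rightarrow> real \<Rightarrow> (real^'m) set" where
  "reachable_set A B T = {y T | u y. bounded_borel u \<and> lin_sol_on A B 0 T u y \<and> y 0 = 0}"

lemma subspace_reachable_set:
  assumes "0 \<le> T"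
  shows "subspace (reachable_set A B T)"
  unfolding subspace_def
proof (intro conjI ballI allI)
  show "0 \<in> reachable_set A B T"
    unfolding reachable_set_def using lin_sol_on_zero[OF assms] bounded_borel_const by force
  fix x y assume "x \<in> reachable_set A B T" "y \<in> reachable_set A B T"
  then obtain u1 y1 u2 y2 where "bounded_borel u1" "lin_sol_on A B 0 T u1 y1" "y1 0 = 0" "x = y1 T"
    "bounded_borel u2" "lin_sol_on A B 0 T u2 y2" "y2 0 = 0" "y = y2 T"
    unfolding reachable_set_def by blast
  then show "x + y \<in> reachable_set A B T"
    unfolding reachable_set_def
    by (intro CollectI exI[of _ "\<lambda>t. u1 t + u2 t"] exI[of _ "\<lambda>t. y1 t + y2 t"])
      (auto intro: bounded_borel_add lin_sol_on_add)
next
  fix c x assume "x \<in> reachable_set A B T"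
  then obtain u y where "bounded_borel u" "lin_sol_on A B 0 T u y" "y 0 = 0" "x = y T"
    unfolding reachable_set_def by blast
  then show "c *\<^sub>R x \<in> reachable_set A B T"
    unfolding reachable_set_def
    by (intro CollectI exI[of _ "\<lambda>t. c *\<^sub>R u t"] exI[of _ "\<lambda>t. c *\<^sub>R y t"])
      (auto intro: bounded_borel_scaleR lin_sol_on_scaleR)
qed

text \<open>Control \<open>0\<close> up to time \<open>T - h\<close> and then the constant \<open>c\<close>.\<close>
lemma mat_exp_integral_in_reachable_set:
  assumes "0 \<le> h" "h \<le> T"
  shows "mat_exp_integral A h (B *v c) \<in> reachable_set A B T"
proof -
  have "lin_sol_on A B 0 T (\<lambda>t. if t \<le> T - h then 0 else c)
      (\<lambda>t. if t \<le> T - h then 0 else const_control_sol A B (T - h) 0 c t)"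
    using assms by (intro lin_sol_on_append lin_sol_on_zero lin_sol_on_const_control) auto
  moreover have "const_control_sol A B (T - h) 0 c T = mat_exp_integral A h (B *v c)"
    by (simp add: const_control_sol_def)
  ultimately show ?thesis
    unfolding reachable_set_def using assms
    by (intro CollectI exI[of _ "\<lambda>t. if t \<le> T - h then 0 else c"]
        exI[of _ "\<lambda>t. if t \<le> T - h then 0 else const_control_sol A B (T - h) 0 c t"])
      (auto intro: bounded_borel_if bounded_borel_const)
qed

lemma reachable_set_eq_UNIV:
  fixes A :: "real^'m^'m" and B :: "real^'k^'m"
  assumes ctrb: "ctrb_rank A B = CARD('m)" and T: "0 < T"
  shows "reachable_set A B T = UNIV"
proof (rule ccontr)
  let ?R = "reachable_set A B T"
  assume "?R \<noteq> UNIV"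
  moreover have "span ?R = ?R"
    using subspace_reachable_set[of T A B] T by simp
  ultimately have "dim ?R < DIM(real^'m)"
    using dim_eq_full[of ?R] dim_subset_UNIV[of ?R] by (metis le_neq_implies_less)
  then obtain \<eta> :: "real^'m" where "\<eta> \<noteq> 0" and \<eta>: "\<And>y. y \<in> span ?R \<Longrightarrow> orthogonal \<eta> y"
    using orthogonal_to_subspace_exists by blast
  have "\<eta> \<bullet> mat_exp_integral A h (B *v c) = 0" if "0 \<le> h" "h \<le> T" for h c
    using \<eta>[OF span_base[OF mat_exp_integral_in_reachable_set[OF that]]]
    by (simp add: orthogonal_def)
  then have "\<eta> \<bullet> ((\<lambda>x. A *v x) ^^ j) (B *v c) = 0" for j c
    using inner_mat_exp_integral_vanishing[OF T] by blast
  then have "\<eta> = 0"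
    using ctrb_rank_orthogonal_eq_0[OF ctrb] by blast
  with \<open>\<eta> \<noteq> 0\<close> show False ..
qed

text \<open>Steer from \<open>0\<close> to \<open>q - e\<^sup>T\<^sup>A p\<close> and add the free motion from \<open>p\<close>.\<close>
lemma exists_steering_control:
  fixes A :: "real^'m^'m" and B :: "real^'k^'m"
  assumes ctrb: "ctrb_rank A B = CARD('m)" and T: "0 < T"
  shows "\<exists>u y. bounded_borel u \<and> lin_sol_on A B 0 T u y \<and> y 0 = p \<and> y T = q"
proof -
  have "q - mat_exp A T p \<in> reachable_set A B T"
    using reachable_set_eq_UNIV[OF ctrb T] by simp
  then obtain u y where u: "bounded_borel u"
    and y: "lin_sol_on A B 0 T u y" "y 0 = 0" "y T = q - mat_exp A T p"
    unfolding reachable_set_def by auto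
  have "lin_sol_on A B 0 T (\<lambda>_. 0) (const_control_sol A B 0 p 0)"
    using T by (intro lin_sol_on_const_control) simp
  from lin_sol_on_add[OF y(1) this]
  have "lin_sol_on A B 0 T u (\<lambda>t. y t + const_control_sol A B 0 p 0 t)"
    by simp
  moreover have "const_control_sol A B 0 p 0 T = mat_exp A T p"
    by (simp add: const_control_sol_def mat_exp_integral_def)
  ultimately show ?thesis
    using u y by (intro exI[of _ u] exI[of _ "\<lambda>t. y t + const_control_sol A B 0 p 0 t"]) auto
qed

section \<open>Means along trajectories\<close>

lemma integrable_on_bounded_borel_comp:
  fixes f :: "'a::euclidean_space \<Rightarrow> 'b::euclidean_space \<Rightarrow> 'c::euclidean_space"
    and u :: "real \<Rightarrow> 'a"
  assumes meas: "(\<lambda>(u, y). f u y) \<in> borel_measurable borel" and bnd: "\<And>u y. norm (f u y) \<le> M"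
    and u: "u \<in> borel_measurable (lebesgue_on {a..b})" and y: "continuous_on {a..b} y"
  shows "(\<lambda>t. f (u t) (y t)) integrable_on {a..b}"
proof -
  have "(\<lambda>t. (u t, y t)) \<in> borel_measurable (lebesgue_on {a..b})"
    using u continuous_imp_measurable_on_sets_lebesgue[OF y] by (intro borel_measurable_Pair) auto
  from measurable_compose[OF this meas]
  have "(\<lambda>t. f (u t) (y t)) \<in> borel_measurable (lebesgue_on {a..b})"
    by simp
  then have "(\<lambda>t. f (u t) (y t)) absolutely_integrable_on {a..b}"
    by (rule measurable_bounded_by_integrable_imp_absolutely_integrable[of _ _ "\<lambda>_. M"])
      (auto simp: bnd)
  then show ?thesis
    by (rule set_lebesgue_integral_eq_integral(1))
qed

lemma bounded_borel_imp_measurable_lebesgue_on: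
  "bounded_borel u \<Longrightarrow> u \<in> borel_measurable (lebesgue_on S)"
  unfolding bounded_borel_def
  by (intro measurable_restrict_space1) (simp add: measurable_completion)

lemma integrable_on_lin_sol:
  fixes f :: "real^'k \<Rightarrow> real^'m \<Rightarrow> 'a::euclidean_space"
  assumes "(\<lambda>(u, y). f u y) \<in> borel_measurable borel" "\<And>u y. norm (f u y) \<le> M"
    and "lin_sol_on A B a b u y" "bounded_borel u"
  shows "(\<lambda>t. f (u t) (y t)) integrable_on {a..b}"
  using assms
  by (intro integrable_on_bounded_borel_comp bounded_borel_imp_measurable_lebesgue_on)
    (auto simp: lin_sol_on_def)

lemma lin_traj_if_lin_sol_on:
  assumes sol: "\<And>t. 0 \<le> t \<Longrightarrow> lin_sol_on A B 0 t u y" and u: "bounded_borel u"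
  shows "lin_traj A B u (y 0) y"
  unfolding lin_traj_def
proof (intro allI impI conjI)
  fix t :: real assume t: "0 \<le> t"
  obtain K where K: "finite K"
    "\<And>x. x \<in> {0<..<t} - K \<Longrightarrow> (y has_vector_derivative (A *v y x + B *v u x)) (at x)"
    using sol[OF t] by (auto simp: lin_sol_on_def)
  have cont: "continuous_on {0..t} y" using sol[OF t] by (simp add: lin_sol_on_def)
  have ftc: "((\<lambda>s. A *v y s + B *v u s) has_integral y t - y 0) {0..t}"
    using K by (intro fundamental_theorem_of_calculus_interior_strong[OF K(1) t _ cont]) auto
  then show "y t = y 0 + integral {0..t} (\<lambda>s. A *v y s + B *v u s)"
    by (simp add: integral_unique)
  have "bounded ((\<lambda>s. A *v y s) ` {0..t})"
    using bounded_linear_image[OF compact_imp_bounded[OF compact_continuous_image[OF cont]]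
        matrix_vector_mul_bounded_linear[of A]]
    by (simp add: image_image)
  moreover have "bounded (u ` {0..t})"
    using u unfolding bounded_borel_def by (blast intro: bounded_subset)
  from bounded_linear_image[OF this matrix_vector_mul_bounded_linear[of B]]
  have "bounded ((\<lambda>s. B *v u s) ` {0..t})"
    by (simp add: image_image)
  ultimately have "bounded ((\<lambda>s. A *v y s + B *v u s) ` {0..t})"
    by (rule bounded_plus_comp)
  then obtain C where "\<And>s. s \<in> {0..t} \<Longrightarrow> norm (A *v y s + B *v u s) \<le> C"
    unfolding bounded_iff by (metis atLeastAtMost_iff image_eqI)
  then show "(\<lambda>s. A *v y s + B *v u s) absolutely_integrable_on {0..t}"
    using ftc by (intro absolutely_integrable_integrable_bound[where g="\<lambda>_. C"]) auto
qed

text \<open>Beyond \<open>S\<close> the control is extended by \<open>0\<close>, which makes it admissible on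
  \<open>[0, \<infinity>)\<close>.\<close>
lemma integral_mean_in_Vset:
  fixes g :: "real^'k \<Rightarrow> real^'m \<Rightarrow> real^'n \<Rightarrow> real^'n"
  assumes sol: "lin_sol_on A B 0 S u y" and u: "bounded_borel u" and y0: "y 0 = p"
  shows "(1 / S) *\<^sub>R integral {0..S} (\<lambda>t. g (u t) (y t) z) \<in> Vset A B g S p z"
proof -
  define u' where "u' t = (if t \<le> S then u t else 0)" for t
  define y' where "y' t = (if t \<le> S then y t else const_control_sol A B S (y S) 0 t)" for t
  have u': "bounded_borel u'"
    unfolding u'_def[abs_def] by (intro bounded_borel_if u bounded_borel_const)
  have "lin_sol_on A B 0 t u' y'" if "0 \<le> t" for t
  proof -
    have "lin_sol_on A B 0 (max S t) u' y'"
      unfolding u'_def[abs_def] y'_def[abs_def]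
      by (intro lin_sol_on_append sol lin_sol_on_const_control) auto
    then show ?thesis by (rule lin_sol_on_subinterval) (use that in auto)
  qed
  then have "lin_traj A B u' (y' 0) y'"
    using u' by (rule lin_traj_if_lin_sol_on)
  moreover have "y' 0 = p"
    using y0 sol by (simp add: y'_def lin_sol_on_def)
  moreover have "adm_control A B p u'"
    using u' calculation
    by (auto simp: adm_control_def intro: bounded_borel_imp_measurable_lebesgue_on)
  moreover have "integral {0..S} (\<lambda>t. g (u' t) (y' t) z) = integral {0..S} (\<lambda>t. g (u t) (y t) z)"
    by (intro integral_cong) (simp add: u'_def y'_def)
  ultimately show ?thesis
    unfolding Vset_def by (intro CollectI exI[of _ u'] exI[of _ y']) auto
qed

lemma integral_mean_in_closed_convex:
  fixes f :: "real \<Rightarrow> 'a::euclidean_space"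
  assumes f: "f integrable_on {a..b}" and ab: "a < b"
    and C: "closed C" "convex C" and fC: "\<And>t. t \<in> {a..b} \<Longrightarrow> f t \<in> C"
  shows "(1 / (b - a)) *\<^sub>R integral {a..b} f \<in> C"
proof (rule ccontr)
  assume "(1 / (b - a)) *\<^sub>R integral {a..b} f \<notin> C"
  then obtain v c where v: "v \<bullet> ((1 / (b - a)) *\<^sub>R integral {a..b} f) < c"
    and vC: "\<And>x. x \<in> C \<Longrightarrow> c < v \<bullet> x"
    using separating_hyperplane_closed_point[OF C(2,1)] by blast
  have "integral {a..b} (\<lambda>_. c) \<le> integral {a..b} (\<lambda>t. v \<bullet> f t)"
    using fC vC integrable_linear[OF f bounded_linear_inner_right, of v]
    by (intro integral_le) (auto simp: o_def less_imp_le)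
  also have "\<dots> = v \<bullet> integral {a..b} f"
    using integral_linear[OF f bounded_linear_inner_right, of v] by (simp add: o_def)
  finally have "c \<le> v \<bullet> ((1 / (b - a)) *\<^sub>R integral {a..b} f)"
    using ab by (simp add: field_simps)
  with v show False by simp
qed

lemma Vset_subset_closed_convex_hull:
  fixes g :: "real^'k \<Rightarrow> real^'m \<Rightarrow> real^'n \<Rightarrow> real^'n"
  assumes meas: "(\<lambda>(u, y). g u y z) \<in> borel_measurable borel"
    and bnd: "\<And>u y. norm (g u y z) \<le> M" and S: "0 < S"
  shows "Vset A B g S p z \<subseteq> closure (convex hull {g u y z | u y. True})"
proof
  fix v assume "v \<in> Vset A B g S p z"
  then obtain u y where v: "v = (1 / S) *\<^sub>R integral {0..S} (\<lambda>t. g (u t) (y t) z)"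
    and adm: "adm_control A B p u" and traj: "lin_traj A B u p y"
    unfolding Vset_def by blast
  have "u \<in> borel_measurable (lebesgue_on {0..S})"
    using adm unfolding adm_control_def by (auto intro: measurable_restrict_mono)
  moreover have "continuous_on {0..S} y"
  proof (rule continuous_on_eq)
    have "(\<lambda>s. A *v y s + B *v u s) integrable_on {0..S}"
      using traj S unfolding lin_traj_def by (auto intro: set_lebesgue_integral_eq_integral(1))
    then show "continuous_on {0..S} (\<lambda>t. p + integral {0..t} (\<lambda>s. A *v y s + B *v u s))"
      by (intro continuous_intros indefinite_integral_continuous_1)
  qed (use traj in \<open>auto simp: lin_traj_def\<close>)
  ultimately have "(\<lambda>t. g (u t) (y t) z) integrable_on {0..S}"
    using integrable_on_bounded_borel_comp[OF meas bnd] by blast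
  then show "v \<in> closure (convex hull {g u y z | u y. True})"
    unfolding v using S
    by (intro integral_mean_in_closed_convex[of _ 0 S, simplified])
      (auto intro!: subsetD[OF closure_subset] hull_inc convex_closure)
qed

section \<open>Chattering controls\<close>

lemma integral_dist_const_le:
  fixes f :: "real \<Rightarrow> 'a::banach"
  assumes f: "f integrable_on {a..b}" and ab: "a \<le> b" and d: "0 \<le> d" and K: "finite K"
    and near: "\<And>t. t \<in> {a..b} - K \<Longrightarrow> dist (f t) c \<le> d"
  shows "norm (integral {a..b} f - (b - a) *\<^sub>R c) \<le> d * (b - a)"
proof -
  have "((\<lambda>t. f t - c) has_integral integral {a..b} f - (b - a) *\<^sub>R c) {a..b}"
    using has_integral_diff[OF integrable_integral[OF f] has_integral_const_real[of c a b]] ab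
    by simp
  from has_integral_bound_real[OF d K this] near ab show ?thesis
    by (simp add: dist_norm)
qed

lemma exists_steer_and_hold:
  fixes A :: "real^'m^'m" and B :: "real^'k^'m"
  assumes ctrb: "ctrb_rank A B = CARD('m)"
    and sol: "lin_sol_on A B 0 T u y" and u: "bounded_borel u" and \<tau>: "0 < \<tau>" and l: "0 \<le> l"
  shows "\<exists>u' y'. bounded_borel u' \<and> lin_sol_on A B 0 (T + \<tau> + l) u' y' \<and>
    (\<forall>t\<le>T. u' t = u t \<and> y' t = y t) \<and>
    (\<forall>t\<in>{T + \<tau><..T + \<tau> + l}. u' t = c \<and> y' t = const_control_sol A B 0 p c (t - (T + \<tau>)))"
proof -
  obtain v x where v: "bounded_borel v" and x: "lin_sol_on A B 0 \<tau> v x" "x 0 = y T" "x \<tau> = p"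
    using exists_steering_control[OF ctrb \<tau>] by blast
  define u' where "u' = (\<lambda>t. if t \<le> T then u t else if t \<le> T + \<tau> then v (t - T) else c)"
  define y' where "y' = (\<lambda>t. if t \<le> T then y t else if t \<le> T + \<tau> then x (t - T)
      else const_control_sol A B (T + \<tau>) p c t)"
  have "lin_sol_on A B T (T + \<tau>) (\<lambda>t. v (t - T)) (\<lambda>t. x (t - T))"
    using lin_sol_on_shift[OF x(1), of T] by (simp add: add.commute)
  then have tail: "lin_sol_on A B T (T + \<tau> + l) (\<lambda>t. if t \<le> T + \<tau> then v (t - T) else c)
      (\<lambda>t. if t \<le> T + \<tau> then x (t - T) else const_control_sol A B (T + \<tau>) p c t)"
    using x(3) l by (intro lin_sol_on_append lin_sol_on_const_control) auto
  have match: "y T = (if T \<le> T + \<tau> then x (T - T) else const_control_sol A B (T + \<tau>) p c T)"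
    using x(2) \<tau> by simp
  have "lin_sol_on A B 0 (T + \<tau> + l) u' y'"
    using lin_sol_on_append[OF sol tail match] unfolding u'_def y'_def .
  moreover have "bounded_borel u'"
    unfolding u'_def by (intro bounded_borel_if u bounded_borel_shift[OF v] bounded_borel_const)
  ultimately show ?thesis
    using \<tau> by (intro exI[of _ u'] exI[of _ y'])
      (auto simp: u'_def y'_def const_control_sol_shift[of _ _ "T + \<tau>"])
qed

lemma lin_sol_on_append_block:
  fixes f :: "real^'k \<Rightarrow> real^'m \<Rightarrow> 'a::euclidean_space"
    and A :: "real^'m^'m" and B :: "real^'k^'m"
  assumes ctrb: "ctrb_rank A B = CARD('m)"
    and meas: "(\<lambda>(u, y). f u y) \<in> borel_measurable borel" and bnd: "\<And>u y. norm (f u y) \<le> M"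
    and sol: "lin_sol_on A B 0 T u y" and u: "bounded_borel u"
    and \<tau>: "0 < \<tau>" and l: "0 \<le> l"
    and near: "\<And>t. 0 \<le> t \<Longrightarrow> t \<le> l \<Longrightarrow> dist (f c (const_control_sol A B 0 p c t)) (f c p) \<le> d"
  shows "\<exists>u' y'. bounded_borel u' \<and> lin_sol_on A B 0 (T + \<tau> + l) u' y' \<and>
    (\<forall>t\<le>T. u' t = u t \<and> y' t = y t) \<and>
    norm (integral {T..T + \<tau> + l} (\<lambda>t. f (u' t) (y' t)) - l *\<^sub>R f c p) \<le> M * \<tau> + d * l"
proof -
  obtain u' y' where u': "bounded_borel u'" and sol': "lin_sol_on A B 0 (T + \<tau> + l) u' y'"
    and agree: "\<forall>t\<le>T. u' t = u t \<and> y' t = y t"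
    and hold: "\<forall>t\<in>{T + \<tau><..T + \<tau> + l}. u' t = c \<and> y' t = const_control_sol A B 0 p c (t - (T + \<tau>))"
    using exists_steer_and_hold[OF ctrb sol u \<tau> l] by blast
  define F where "F = (\<lambda>t. f (u' t) (y' t))"
  have T: "0 \<le> T" using sol by (simp add: lin_sol_on_def)
  have "lin_sol_on A B T (T + \<tau> + l) u' y'"
    using T \<tau> l by (intro lin_sol_on_subinterval[OF sol']) auto
  then have F: "F integrable_on {T..T + \<tau> + l}"
    unfolding F_def by (rule integrable_on_lin_sol[OF meas bnd _ u'])
  then have F1: "F integrable_on {T..T + \<tau>}" and F2: "F integrable_on {T + \<tau>..T + \<tau> + l}"
    using \<tau> l by (auto intro: integrable_subinterval_real)
  have split: "integral {T..T + \<tau>} F + integral {T + \<tau>..T + \<tau> + l} F = integral {T..T + \<tau> + l} F"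
    using Henstock_Kurzweil_Integration.integral_combine[OF _ _ F] \<tau> l by simp
  have M: "0 \<le> M" and d: "0 \<le> d"
    using bnd[of c p] near[of 0] l
    by (auto intro: order_trans[OF zero_le_dist] order_trans[OF norm_ge_zero])
  have "norm (integral {T..T + \<tau>} F) \<le> M * \<tau>"
    using integral_dist_const_le[OF F1 _ M finite.emptyI, of 0] \<tau> bnd by (simp add: F_def)
  moreover have "norm (integral {T + \<tau>..T + \<tau> + l} F - l *\<^sub>R f c p) \<le> d * l"
  proof -
    have "dist (F t) (f c p) \<le> d" if "t \<in> {T + \<tau>..T + \<tau> + l} - {T + \<tau>}" for t
      using that hold near[of "t - (T + \<tau>)"] by (auto simp: F_def)
    then show ?thesis
      using integral_dist_const_le[OF F2 _ d, of "{T + \<tau>}" "f c p"] l by simp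
  qed
  ultimately have "norm (integral {T..T + \<tau> + l} F - l *\<^sub>R f c p) \<le> M * \<tau> + d * l"
    unfolding split[symmetric] by (smt (verit) norm_triangle_ineq add_diff_eq)
  then show ?thesis
    using u' sol' agree unfolding F_def by blast
qed

lemma chattering_control:
  fixes f :: "real^'k \<Rightarrow> real^'m \<Rightarrow> 'a::euclidean_space"
    and A :: "real^'m^'m" and B :: "real^'k^'m" and K :: nat
  assumes ctrb: "ctrb_rank A B = CARD('m)"
    and meas: "(\<lambda>(u, y). f u y) \<in> borel_measurable borel" and bnd: "\<And>u y. norm (f u y) \<le> M"
    and \<tau>: "0 < \<tau>" and l: "\<And>b. 0 \<le> l b"
    and near: "\<And>b t. 0 \<le> t \<Longrightarrow> t \<le> l b \<Longrightarrow>
      dist (f (U b) (const_control_sol A B 0 (Y b) (U b) t)) (f (U b) (Y b)) \<le> d"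
  shows "\<exists>u y. bounded_borel u \<and> lin_sol_on A B 0 (\<Sum>b<K. \<tau> + l b) u y \<and> y 0 = p \<and>
    norm (integral {0..\<Sum>b<K. \<tau> + l b} (\<lambda>t. f (u t) (y t)) - (\<Sum>b<K. l b *\<^sub>R f (U b) (Y b)))
      \<le> (\<Sum>b<K. M * \<tau> + d * l b)"
proof (induction K)
  case 0
  show ?case
    by (intro exI[of _ "\<lambda>_. 0"] exI[of _ "\<lambda>_. p"]) (simp add: bounded_borel_const lin_sol_on_point)
next
  case (Suc K)
  define T where "T = (\<Sum>b<K. \<tau> + l b)"
  obtain u y where u: "bounded_borel u" and sol: "lin_sol_on A B 0 T u y" and "y 0 = p"
    and err: "norm (integral {0..T} (\<lambda>t. f (u t) (y t)) - (\<Sum>b<K. l b *\<^sub>R f (U b) (Y b)))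
      \<le> (\<Sum>b<K. M * \<tau> + d * l b)"
    using Suc.IH unfolding T_def by blast
  obtain u' y' where u': "bounded_borel u'" and sol': "lin_sol_on A B 0 (T + \<tau> + l K) u' y'"
    and agree: "\<forall>t\<le>T. u' t = u t \<and> y' t = y t"
    and blk: "norm (integral {T..T + \<tau> + l K} (\<lambda>t. f (u' t) (y' t)) - l K *\<^sub>R f (U K) (Y K))
      \<le> M * \<tau> + d * l K"
    using lin_sol_on_append_block[OF ctrb meas bnd sol u \<tau> l near] by blast
  have T: "0 \<le> T" using sol by (simp add: lin_sol_on_def)
  have "(\<lambda>t. f (u' t) (y' t)) integrable_on {0..T + \<tau> + l K}"
    by (rule integrable_on_lin_sol[OF meas bnd sol' u'])
  then have "integral {0..T + \<tau> + l K} (\<lambda>t. f (u' t) (y' t))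
      = integral {0..T} (\<lambda>t. f (u' t) (y' t)) + integral {T..T + \<tau> + l K} (\<lambda>t. f (u' t) (y' t))"
    using T \<tau> l[of K] by (simp add: Henstock_Kurzweil_Integration.integral_combine)
  moreover have "integral {0..T} (\<lambda>t. f (u' t) (y' t)) = integral {0..T} (\<lambda>t. f (u t) (y t))"
    using agree by (intro integral_cong) auto
  ultimately have "integral {0..T + \<tau> + l K} (\<lambda>t. f (u' t) (y' t))
      - (\<Sum>b<Suc K. l b *\<^sub>R f (U b) (Y b))
    = (integral {0..T} (\<lambda>t. f (u t) (y t)) - (\<Sum>b<K. l b *\<^sub>R f (U b) (Y b)))
      + (integral {T..T + \<tau> + l K} (\<lambda>t. f (u' t) (y' t)) - l K *\<^sub>R f (U K) (Y K))"
    by simp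
  then have "norm (integral {0..T + \<tau> + l K} (\<lambda>t. f (u' t) (y' t))
      - (\<Sum>b<Suc K. l b *\<^sub>R f (U b) (Y b))) \<le> (\<Sum>b<Suc K. M * \<tau> + d * l b)"
    using err blk norm_triangle_ineq by (smt (verit) sum.lessThan_Suc)
  moreover have "y' 0 = p" using agree T \<open>y 0 = p\<close> by simp
  ultimately show ?case
    using u' sol' by (intro exI[of _ u'] exI[of _ y']) (simp add: T_def add.assoc)
qed

lemma sum_lessThan_mult_mod:
  fixes g :: "nat \<Rightarrow> 'a::real_vector"
  shows "(\<Sum>b<N * k. g (b mod k)) = real N *\<^sub>R (\<Sum>i<k. g i)"
proof -
  have "(\<Sum>b<N * k. g (b mod k)) = (\<Sum>m<N. \<Sum>b = m * k..<m * k + k. g (b mod k))"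
    using sum.nat_group[of "\<lambda>b. g (b mod k)" k N] by (simp add: mult.commute)
  also have "\<dots> = (\<Sum>_<N. \<Sum>i<k. g i)"
  proof (rule sum.cong[OF refl])
    fix m
    have "(\<Sum>b = 0 + m * k..<k + m * k. g (b mod k)) = (\<Sum>i = 0..<k. g ((i + m * k) mod k))"
      by (rule sum.shift_bounds_nat_ivl)
    also have "\<dots> = (\<Sum>i<k. g i)"
      by (rule sum.cong) auto
    finally show "(\<Sum>b = m * k..<m * k + k. g (b mod k)) = (\<Sum>i<k. g i)"
      by (simp add: add.commute)
  qed
  finally show ?thesis
    by (simp add: sum_constant_scaleR)
qed

lemma norm_sum_convex_le:
  fixes x :: "nat \<Rightarrow> 'a::real_normed_vector"
  assumes "\<And>i. i < k \<Longrightarrow> 0 \<le> w i" "(\<Sum>i<k. w i) = 1" "\<And>i. i < k \<Longrightarrow> norm (x i) \<le> M"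
  shows "norm (\<Sum>i<k. w i *\<^sub>R x i) \<le> M"
proof -
  have "norm (\<Sum>i<k. w i *\<^sub>R x i) \<le> (\<Sum>i<k. w i * M)"
    using assms(1,3) by (intro order_trans[OF norm_sum] sum_mono) (simp add: mult_left_mono)
  then show ?thesis
    by (simp add: assms(2) flip: sum_distrib_right)
qed

lemma norm_diff_scaleR_le_split:
  fixes I q :: "'a::real_normed_vector"
  assumes "norm (I - ((1 - \<theta>) * S) *\<^sub>R q) \<le> \<theta> * S * M + d * ((1 - \<theta>) * S)"
    and "norm q \<le> M" "0 \<le> \<theta>" "\<theta> \<le> 1" "0 \<le> d" "0 \<le> S"
  shows "norm (I - S *\<^sub>R q) \<le> S * (2 * M * \<theta> + d)"
proof -
  have "norm (I - S *\<^sub>R q) \<le> norm (I - ((1 - \<theta>) * S) *\<^sub>R q) + norm ((\<theta> * S) *\<^sub>R q)"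
    using norm_triangle_ineq4[of "I - ((1 - \<theta>) * S) *\<^sub>R q" "(\<theta> * S) *\<^sub>R q"]
    by (simp add: algebra_simps)
  moreover have "norm ((\<theta> * S) *\<^sub>R q) \<le> \<theta> * S * M"
    using assms(2-6) by (simp add: mult_left_mono)
  moreover have "d * ((1 - \<theta>) * S) \<le> d * S"
    using assms(3-6) by (intro mult_left_mono) (auto simp: mult_left_le_one_le)
  ultimately show ?thesis
    using assms(1) by (simp add: algebra_simps)
qed

lemma cyclic_chattering_control:
  fixes f :: "real^'k \<Rightarrow> real^'m \<Rightarrow> 'a::euclidean_space"
    and A :: "real^'m^'m" and B :: "real^'k^'m" and N k :: nat and w :: "nat \<Rightarrow> real"
  assumes ctrb: "ctrb_rank A B = CARD('m)"
    and meas: "(\<lambda>(u, y). f u y) \<in> borel_measurable borel" and bnd: "\<And>u y. norm (f u y) \<le> M"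
    and S: "0 < S" and N: "0 < N" and k: "0 < k" and \<theta>: "0 < \<theta>" "\<theta> \<le> 1"
    and w: "\<And>i. i < k \<Longrightarrow> 0 \<le> w i" "(\<Sum>i<k. w i) = 1"
    and near: "\<And>i t. i < k \<Longrightarrow> 0 \<le> t \<Longrightarrow> t \<le> S / N \<Longrightarrow>
      dist (f (U i) (const_control_sol A B 0 (Y i) (U i) t)) (f (U i) (Y i)) \<le> d"
  shows "\<exists>u y. bounded_borel u \<and> lin_sol_on A B 0 S u y \<and> y 0 = p \<and>
    norm (integral {0..S} (\<lambda>t. f (u t) (y t)) - S *\<^sub>R (\<Sum>i<k. w i *\<^sub>R f (U i) (Y i)))
      \<le> S * (2 * M * \<theta> + d)"
proof -
  define h where "h = S / N"
  define \<tau> where "\<tau> = \<theta> * h / k"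
  define l where "l b = (1 - \<theta>) * h * w (b mod k)" for b
  define q where "q = (\<Sum>i<k. w i *\<^sub>R f (U i) (Y i))"
  have h: "0 < h" "N * h = S"
    using S N by (simp_all add: h_def)
  have \<tau>: "0 < \<tau>"
    using \<theta> h k by (simp add: \<tau>_def)
  have w1: "w i \<le> 1" if "i < k" for i
    using member_le_sum[of i "{..<k}" w] w that by simp
  have l: "0 \<le> l b" "l b \<le> h" for b
  proof -
    have "0 \<le> (1 - \<theta>) * w (b mod k)" "(1 - \<theta>) * w (b mod k) \<le> 1"
      using \<theta> w(1)[of "b mod k"] w1[of "b mod k"] k by (auto intro: mult_le_one)
    then show "0 \<le> l b" "l b \<le> h"
      using mult_left_le[of "(1 - \<theta>) * w (b mod k)" h] h by (simp_all add: l_def mult_ac)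
  qed
  have near': "\<And>b t. 0 \<le> t \<Longrightarrow> t \<le> l b \<Longrightarrow>
      dist (f (U (b mod k)) (const_control_sol A B 0 (Y (b mod k)) (U (b mod k)) t))
        (f (U (b mod k)) (Y (b mod k))) \<le> d"
    using near l(2) k by (simp add: h_def order_trans)
  obtain u y where u: "bounded_borel u" and sol: "lin_sol_on A B 0 (\<Sum>b<N * k. \<tau> + l b) u y"
    and "y 0 = p"
    and err: "norm (integral {0..\<Sum>b<N * k. \<tau> + l b} (\<lambda>t. f (u t) (y t))
        - (\<Sum>b<N * k. l b *\<^sub>R f (U (b mod k)) (Y (b mod k)))) \<le> (\<Sum>b<N * k. M * \<tau> + d * l b)"
    using chattering_control[where l=l and U="\<lambda>b. U (b mod k)" and Y="\<lambda>b. Y (b mod k)",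
        OF ctrb meas bnd \<tau> l(1) near']
    by blast
  have "(\<Sum>b<N * k. l b) = real N *\<^sub>R (\<Sum>i<k. (1 - \<theta>) * h * w i)"
    unfolding l_def by (rule sum_lessThan_mult_mod)
  also have "(\<Sum>i<k. (1 - \<theta>) * h * w i) = (1 - \<theta>) * h"
    using w(2) by (simp flip: sum_distrib_left)
  finally have sum_l: "(\<Sum>b<N * k. l b) = (1 - \<theta>) * S"
    by (simp add: h(2)[symmetric] mult_ac)
  have sum_S: "(\<Sum>b<N * k. \<tau> + l b) = S"
    using k h(2) by (simp add: sum.distrib sum_l \<tau>_def algebra_simps)
  moreover have "(\<Sum>b<N * k. l b *\<^sub>R f (U (b mod k)) (Y (b mod k)))
      = real N *\<^sub>R (\<Sum>i<k. ((1 - \<theta>) * h * w i) *\<^sub>R f (U i) (Y i))"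
    unfolding l_def by (rule sum_lessThan_mult_mod)
  then have "(\<Sum>b<N * k. l b *\<^sub>R f (U (b mod k)) (Y (b mod k))) = ((1 - \<theta>) * S) *\<^sub>R q"
    by (simp add: q_def h(2)[symmetric] scaleR_sum_right mult_ac)
  moreover have "(\<Sum>b<N * k. M * \<tau> + d * l b) = \<theta> * S * M + d * ((1 - \<theta>) * S)"
    using k h(2) by (simp add: sum.distrib sum_l \<tau>_def flip: sum_distrib_left)
  ultimately have "norm (integral {0..S} (\<lambda>t. f (u t) (y t)) - ((1 - \<theta>) * S) *\<^sub>R q)
      \<le> \<theta> * S * M + d * ((1 - \<theta>) * S)"
    using err by simp
  moreover have "norm q \<le> M"
    unfolding q_def using w bnd by (rule norm_sum_convex_le)
  ultimately have "norm (integral {0..S} (\<lambda>t. f (u t) (y t)) - S *\<^sub>R q) \<le> S * (2 * M * \<theta> + d)"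
    using \<theta> S near[of 0 0] k by (intro norm_diff_scaleR_le_split) auto
  then show ?thesis
    using u sol \<open>y 0 = p\<close> unfolding sum_S q_def by blast
qed

lemma eventually_const_control_sol_near:
  assumes cont: "continuous_on UNIV (f c)" and d: "0 < d"
  shows "\<forall>\<^sub>F h in at_right 0. \<forall>t\<in>{0..h}.
    dist (f c (const_control_sol A B 0 p c t)) (f c p) \<le> d"
proof -
  have "continuous_on {0..1} (const_control_sol A B 0 p c)"
    using lin_sol_on_const_control[of 0 1 A B c p] by (simp add: lin_sol_on_def)
  then have "continuous_on {0..1} (\<lambda>t. f c (const_control_sol A B 0 p c t))"
    by (rule continuous_on_compose2[OF cont]) auto
  from continuous_on_Icc_at_rightD[OF this]
  have "\<forall>\<^sub>F t in at_right 0. dist (f c (const_control_sol A B 0 p c t)) (f c p) < d"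
    using d by (simp add: tendsto_iff)
  then obtain b where "0 < b"
    and b: "\<And>t. 0 < t \<Longrightarrow> t < b \<Longrightarrow> dist (f c (const_control_sol A B 0 p c t)) (f c p) < d"
    unfolding eventually_at_right_field by blast
  show ?thesis
    unfolding eventually_at_right_field
    using \<open>0 < b\<close> b d by (intro exI[of _ b]) (force simp: le_less)
qed

lemma uniform_const_control_sol_near:
  fixes f :: "real^'k \<Rightarrow> real^'m \<Rightarrow> 'a::metric_space" and k :: nat
  assumes cont: "\<And>u. continuous_on UNIV (f u)" and d: "0 < d"
  obtains h where "0 < h" "\<And>i t. i < k \<Longrightarrow> 0 \<le> t \<Longrightarrow> t \<le> h \<Longrightarrow>
    dist (f (U i) (const_control_sol A B 0 (Y i) (U i) t)) (f (U i) (Y i)) \<le> d"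
proof -
  have "\<forall>\<^sub>F h in at_right 0. \<forall>i\<in>{..<k}. \<forall>t\<in>{0..h}.
      dist (f (U i) (const_control_sol A B 0 (Y i) (U i) t)) (f (U i) (Y i)) \<le> d"
    using d by (intro eventually_ball_finite ballI eventually_const_control_sol_near cont) auto
  then show thesis
    using that unfolding eventually_at_right_field
    by (metis atLeastAtMost_iff field_lbound_gt_zero lessThan_iff)
qed

lemma convex_hull_values_indexed:
  fixes f :: "'a \<Rightarrow> 'b \<Rightarrow> 'c::real_vector"
  assumes "q \<in> convex hull {f u y | u y. True}"
  obtains k :: nat and w U Y where "0 < k" "\<And>i. i < k \<Longrightarrow> 0 \<le> w i" "(\<Sum>i<k. w i) = 1"
    "q = (\<Sum>i<k. w i *\<^sub>R f (U i) (Y i))"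
proof -
  obtain k :: nat and w x where wx: "\<forall>i\<in>{1..k}. 0 \<le> w i \<and> x i \<in> {f u y | u y. True}"
    and sum_w: "sum w {1..k} = 1" and sum_wx: "(\<Sum>i = 1..k. w i *\<^sub>R x i) = q"
    using assms unfolding convex_hull_indexed by blast
  have "\<forall>i\<in>{1..k}. \<exists>u y. x i = f u y"
    using wx by blast
  then obtain U Y where UY: "\<And>i. i \<in> {1..k} \<Longrightarrow> x i = f (U i) (Y i)"
    by metis
  have "k \<noteq> 0"
    using sum_w by (intro notI) simp
  then show thesis
    using wx sum_w sum_wx UY unfolding sum.atLeast1_atMost_eq[folded One_nat_def]
    by (intro that[of k "\<lambda>i. w (Suc i)" "\<lambda>i. U (Suc i)" "\<lambda>i. Y (Suc i)"]) auto
qed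

lemma convex_hull_approachable_by_averages:
  fixes f :: "real^'k \<Rightarrow> real^'m \<Rightarrow> 'a::euclidean_space"
    and A :: "real^'m^'m" and B :: "real^'k^'m"
  assumes ctrb: "ctrb_rank A B = CARD('m)"
    and meas: "(\<lambda>(u, y). f u y) \<in> borel_measurable borel" and bnd: "\<And>u y. norm (f u y) \<le> M"
    and cont: "\<And>u. continuous_on UNIV (f u)"
    and S: "0 < S" and q: "q \<in> convex hull {f u y | u y. True}" and \<epsilon>: "0 < \<epsilon>"
  shows "\<exists>u y. bounded_borel u \<and> lin_sol_on A B 0 S u y \<and> y 0 = p \<and>
    dist ((1 / S) *\<^sub>R integral {0..S} (\<lambda>t. f (u t) (y t))) q < \<epsilon>"
proof -
  have M: "0 \<le> M" using bnd by (rule order_trans[OF norm_ge_zero])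
  obtain k :: nat and w U Y where k: "0 < k" and w: "\<And>i. i < k \<Longrightarrow> 0 \<le> w i" "(\<Sum>i<k. w i) = 1"
    and q: "q = (\<Sum>i<k. w i *\<^sub>R f (U i) (Y i))"
    using convex_hull_values_indexed[OF q] by blast
  define \<theta> where "\<theta> = min 1 (\<epsilon> / (4 * (M + 1)))"
  define d where "d = \<epsilon> / 4"
  have \<theta>: "0 < \<theta>" "\<theta> \<le> 1" and "2 * M * \<theta> \<le> \<epsilon> / 2"
  proof -
    have "2 * M * \<theta> \<le> 2 * (M + 1) * (\<epsilon> / (4 * (M + 1)))"
      using M \<epsilon> by (intro mult_mono) (auto simp: \<theta>_def)
    also have "\<dots> = \<epsilon> / 2"
      using M by (simp add: field_simps)
    finally show "2 * M * \<theta> \<le> \<epsilon> / 2" .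
  qed (use M \<epsilon> in \<open>auto simp: \<theta>_def\<close>)
  have "0 < d"
    using \<epsilon> by (simp add: d_def)
  then obtain h0 where "0 < h0" and near: "\<And>i t. i < k \<Longrightarrow> 0 \<le> t \<Longrightarrow> t \<le> h0 \<Longrightarrow>
      dist (f (U i) (const_control_sol A B 0 (Y i) (U i) t)) (f (U i) (Y i)) \<le> d"
    by (rule uniform_const_control_sol_near[where f=f and k=k and U=U and Y=Y and A=A and B=B,
          OF cont]) blast
  obtain N :: nat where N: "S / h0 < N"
    using reals_Archimedean2 by blast
  moreover have "0 < real N"
    using N S \<open>0 < h0\<close> by (smt (verit) divide_pos_pos)
  ultimately have "0 < N" "S / N \<le> h0"
    using \<open>0 < h0\<close> by (simp_all add: field_simps)
  then obtain u y where u: "bounded_borel u" and sol: "lin_sol_on A B 0 S u y" and y0: "y 0 = p"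
    and err: "norm (integral {0..S} (\<lambda>t. f (u t) (y t)) - S *\<^sub>R q) \<le> S * (2 * M * \<theta> + d)"
    using cyclic_chattering_control[OF ctrb meas bnd S _ k \<theta> w, of N U Y d p] near q
    by (auto simp: order_trans)
  have "dist ((1 / S) *\<^sub>R integral {0..S} (\<lambda>t. f (u t) (y t))) q
      = norm (integral {0..S} (\<lambda>t. f (u t) (y t)) - S *\<^sub>R q) / S"
  proof -
    have "integral {0..S} (\<lambda>t. f (u t) (y t)) - S *\<^sub>R q
        = S *\<^sub>R ((1 / S) *\<^sub>R integral {0..S} (\<lambda>t. f (u t) (y t)) - q)"
      using S by (simp add: scaleR_diff_right)
    then show ?thesis
      using S by (simp add: dist_norm)
  qed
  also have "\<dots> \<le> 2 * M * \<theta> + d"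
    using err S by (simp add: divide_le_eq mult.commute)
  also have "\<dots> < \<epsilon>"
    using \<open>2 * M * \<theta> \<le> \<epsilon> / 2\<close> \<epsilon> by (simp add: d_def)
  finally show ?thesis
    using u sol y0 by blast
qed

lemma convex_hull_subset_closure_Vset:
  fixes g :: "real^'k \<Rightarrow> real^'m \<Rightarrow> real^'n \<Rightarrow> real^'n"
    and A :: "real^'m^'m" and B :: "real^'k^'m"
  assumes ctrb: "ctrb_rank A B = CARD('m)"
    and meas: "(\<lambda>(u, y). g u y z) \<in> borel_measurable borel" and bnd: "\<And>u y. norm (g u y z) \<le> M"
    and cont: "\<And>u. continuous_on UNIV (\<lambda>y. g u y z)" and S: "0 < S"
  shows "convex hull {g u y z | u y. True} \<subseteq> closure (Vset A B g S p z)"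
proof
  fix q assume q: "q \<in> convex hull {g u y z | u y. True}"
  show "q \<in> closure (Vset A B g S p z)"
    unfolding closure_approachable
  proof (intro allI impI)
    fix \<epsilon> :: real assume "0 < \<epsilon>"
    then obtain u y where "bounded_borel u" "lin_sol_on A B 0 S u y" "y 0 = p"
      and "dist ((1 / S) *\<^sub>R integral {0..S} (\<lambda>t. g (u t) (y t) z)) q < \<epsilon>"
      using convex_hull_approachable_by_averages[of A B "\<lambda>u y. g u y z", OF ctrb meas bnd cont S q]
      by blast
    then show "\<exists>v\<in>Vset A B g S p z. dist v q < \<epsilon>"
      using integral_mean_in_Vset by blast
  qed
qed

theorem lemma2:
  fixes A :: "real^'m^'m" and B :: "real^'k^'m"
    and g :: "real^'k \<Rightarrow> real^'m \<Rightarrow> real^'n \<Rightarrow> real^'n"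
  assumes ctrb: "ctrb_rank A B = CARD('m)"
    and meas: "(\<lambda>(u, y, z). g u y z) \<in> borel_measurable borel"
    and bnd: "\<exists>Mg. \<forall>u y z. norm (g u y z) \<le> Mg"
    and lip: "\<exists>L. \<forall>u y z y' z'. dist (g u y z) (g u y' z') \<le> L * dist (y, z) (y', z')"
    and S: "S > 0"
  shows "closure (Vset A B g S y z) = closure (convex hull {g u y' z | u y'. True})"
proof -
  obtain M where M: "\<And>u y. norm (g u y z) \<le> M"
    using bnd by blast
  obtain L where L: "\<And>u y y'. dist (g u y z) (g u y' z) \<le> L * dist (y, z) (y', z)"
    using lip by blast
  have "dist (g u y z) (g u y' z) \<le> max L 0 * dist y y'" for u y y'
    using L[of u y y'] mult_right_mono[OF max.cobounded1[of L 0] zero_le_dist[of y y']]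
    by (simp add: dist_Pair_Pair)
  then have cont: "continuous_on UNIV (\<lambda>y. g u y z)" for u
    by (intro lipschitz_on_continuous_on[of "max L 0"] lipschitz_onI) auto
  have "(\<lambda>(u, y). (u, y, z)) \<in> borel_measurable (borel :: ((real^'k) \<times> (real^'m)) measure)"
    by (intro borel_measurable_continuous_onI) (simp add: case_prod_beta' continuous_intros)
  from measurable_compose[OF this meas]
  have meas_z: "(\<lambda>(u, y). g u y z) \<in> borel_measurable borel"
    by (simp add: case_prod_beta')
  show ?thesis
  proof (intro equalityI closure_minimal closed_closure)
    show "Vset A B g S y z \<subseteq> closure (convex hull {g u y' z | u y'. True})"
      by (rule Vset_subset_closed_convex_hull[where g=g and z=z, OF meas_z M S])
    show "convex hull {g u y' z | u y'. True} \<subseteq> closure (Vset A B g S y z)"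
      by (rule convex_hull_subset_closure_Vset[where g=g and z=z, OF ctrb meas_z M cont S])
  qed
qed

end
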